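(* Let $K$ be a $p$-adic field that is Galois over $\mathbb{Q}_p$. For $1\le i\le r$ let $\mathbf{h}_i=(h_{i,\sigma})_{\sigma\in\Gamma_K}$ be a family of integers indexed by $\Gamma_K$, and assume that for each $i$: (a) $\sum_{\sigma\in\Gamma_K}h_{i,\sigma}\neq 0$, and (b) $h_{i,\sigma}\ne h_{i,\tau}$ for some $\sigma,\tau\in\Gamma_K$. Then there exists $\omega\in\ker(\mathrm{Nr}_{K/\mathbb{Q}_p}\colon \mathcal{O}_K^\times\to\mathbb{Z}_p^\times)$ such that $\psi_{\mathbf{h}_1}(\omega),\dots,\psi_{\mathbf{h}_r}(\omega)$ all have infinite order.
   Context: $\Gamma_K$ is the set of $\mathbb{Q}_p$-algebra embeddings $K\to\overline{\mathbb{Q}}_p$; since $K/\mathbb{Q}_p$ is Galois these are automorphisms of $K$, so $\sigma^{-1}x\in K$ makes sense. For a family of integers $\mathbf{h}=(h_\sigma)_{\sigma\in\Gamma_K}$, the continuous character $\psi_{\mathbf{h}}\colon\mathcal{O}_K^\times\to\mathcal{O}_K^\times$ is defined by $\psi_{\mathbf{h}}(x)=\prod_{\sigma\in\Gamma_K}(\sigma^{-1}x)^{-h_\sigma}$. $\mathcal{O}_K$ is the ring of integers of $K$. *)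

theory Defs
  imports Complex_Main "HOL-Computational_Algebra.Primes"
begin

text \<open>A field K (the whole type 'a) of characteristic 0 with a non-archimedean absolute
  value absv.  Q_p is realised inside K as the closure of the rationals.\<close>

definition nonarch_absval :: "('a::field_char_0 \<Rightarrow> real) \<Rightarrow> bool" where
  "nonarch_absval absv \<longleftrightarrow>
     (\<forall>x. absv x \<ge> 0) \<and> (\<forall>x. absv x = 0 \<longleftrightarrow> x = 0) \<and>
     (\<forall>x y. absv (x * y) = absv x * absv y) \<and>
     (\<forall>x y. absv (x + y) \<le> max (absv x) (absv y))"

definition absv_complete :: "('a::field_char_0 \<Rightarrow> real) \<Rightarrow> bool" where
  "absv_complete absv \<longleftrightarrow>
     (\<forall>X::nat \<Rightarrow> 'a. (\<forall>e>0. \<exists>N. \<forall>m\<ge>N. \<forall>n\<ge>N. absv (X m - X n) < e)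
        \<longrightarrow> (\<exists>L. (\<lambda>n. absv (X n - L)) \<longlonglongrightarrow> 0))"

definition Qp_in :: "('a::field_char_0 \<Rightarrow> real) \<Rightarrow> 'a set" where
  "Qp_in absv = {x. \<exists>q::nat \<Rightarrow> rat. (\<lambda>n. absv (of_rat (q n) - x)) \<longlonglongrightarrow> 0}"

definition finite_over :: "'a::field_char_0 set \<Rightarrow> bool" where
  "finite_over F \<longleftrightarrow> (\<exists>B. finite B \<and>
     (\<forall>x. \<exists>c. (\<forall>b\<in>B. c b \<in> F) \<and> x = (\<Sum>b\<in>B. c b * b)))"

text \<open>K is a p-adic field: a finite extension of Q_p, where the absolute value extends
  (a power of) the p-adic one (absv p < 1) and K is complete.\<close>
definition padic_field :: "nat \<Rightarrow> ('a::field_char_0 \<Rightarrow> real) \<Rightarrow> bool" where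
  "padic_field p absv \<longleftrightarrow> prime p \<and> nonarch_absval absv \<and> absv (of_nat p) < 1 \<and>
     absv_complete absv \<and> finite_over (Qp_in absv)"

definition field_aut :: "('a::field \<Rightarrow> 'a) \<Rightarrow> bool" where
  "field_aut \<sigma> \<longleftrightarrow> bij \<sigma> \<and> (\<forall>x y. \<sigma> (x + y) = \<sigma> x + \<sigma> y) \<and>
     (\<forall>x y. \<sigma> (x * y) = \<sigma> x * \<sigma> y) \<and> \<sigma> 1 = 1"

text \<open>Gamma_K: automorphisms of K over Q_p (for Galois K these are exactly the
  Q_p-embeddings K \<rightarrow> \<bar>Q_p).\<close>
definition Gal :: "('a::field_char_0 \<Rightarrow> real) \<Rightarrow> ('a \<Rightarrow> 'a) set" where
  "Gal absv = {\<sigma>. field_aut \<sigma> \<and> (\<forall>x\<in>Qp_in absv. \<sigma> x = x)}"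

definition galois_over_Qp :: "('a::field_char_0 \<Rightarrow> real) \<Rightarrow> bool" where
  "galois_over_Qp absv \<longleftrightarrow> {x. \<forall>\<sigma>\<in>Gal absv. \<sigma> x = x} = Qp_in absv"

definition OK_units :: "('a::field_char_0 \<Rightarrow> real) \<Rightarrow> 'a set" where
  "OK_units absv = {x. absv x = 1}"

definition norm_KQp :: "('a::field_char_0 \<Rightarrow> real) \<Rightarrow> 'a \<Rightarrow> 'a" where
  "norm_KQp absv x = (\<Prod>\<sigma>\<in>Gal absv. \<sigma> x)"

definition psi :: "('a::field_char_0 \<Rightarrow> real) \<Rightarrow> (('a \<Rightarrow> 'a) \<Rightarrow> int) \<Rightarrow> 'a \<Rightarrow> 'a" where
  "psi absv h x = (\<Prod>\<sigma>\<in>Gal absv. (inv \<sigma> x) powi (- h \<sigma>))"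

definition infinite_order :: "'a::monoid_mult \<Rightarrow> bool" where
  "infinite_order y \<longleftrightarrow> (\<forall>n::nat. n > 0 \<longrightarrow> y ^ n \<noteq> 1)"

end

theory Submission
  imports Defs
begin

text \<open>
  Let n = card Gamma_K and, for a suitable t, put omega = x^n / N(x) with x = 1 + t y; it has norm 1.
  Taking t a high power of p (fixed by Gamma_K) makes every conjugate of x close to 1, and to first
  order in t one finds psi_h(omega) = 1 + t L_h(y) with
  L_h(y) = (SUM sigma. h_sigma (Tr y - n sigma^-1 y)) = (SUM rho. (SUM h - n h_(rho^-1)) rho y).
  By Dedekind's independence of characters L_h is not identically zero when h is not constant, and
  finitely many nonzero additive maps have a common non-root.  So for small t every psi_(h_i)(omega)
  satisfies 0 < |z - 1| < |p|, and such z have infinite order: prime-to-p powers preserve |z - 1|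
  while the p-th power multiplies it by |p|.
\<close>

locale nonarch_field =
  fixes absv :: "'a::field_char_0 \<Rightarrow> real"
  assumes nonarch_absval: "nonarch_absval absv"
begin

lemma absv_nonneg: "absv x \<ge> 0"
  using nonarch_absval by (simp add: nonarch_absval_def)

lemma absv_eq_0_iff [simp]: "absv x = 0 \<longleftrightarrow> x = 0"
  using nonarch_absval by (simp add: nonarch_absval_def)

lemma absv_0 [simp]: "absv 0 = 0"
  by simp

lemma absv_pos_iff: "0 < absv x \<longleftrightarrow> x \<noteq> 0"
  using absv_nonneg[of x] by (auto simp: less_le)

lemma absv_mult [simp]: "absv (x * y) = absv x * absv y"
  using nonarch_absval by (simp add: nonarch_absval_def)

lemma absv_mult_le: "absv x \<le> a \<Longrightarrow> absv y \<le> b \<Longrightarrow> absv (x * y) \<le> a * b"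
  using absv_nonneg by (simp add: mult_mono')

lemma absv_add_le_max: "absv (x + y) \<le> max (absv x) (absv y)"
  using nonarch_absval by (simp add: nonarch_absval_def)

lemma absv_1 [simp]: "absv 1 = 1"
  using absv_mult[of 1 1] by simp

lemma absv_minus [simp]: "absv (- x) = absv x"
proof -
  have "absv (-1) * absv (-1) = 1"
    using absv_mult[of "-1" "-1"] by simp
  then have "absv (-1) = 1"
    using absv_nonneg[of "-1"] by (metis abs_of_nonneg abs_square_eq_1 power2_eq_square)
  then show ?thesis
    using absv_mult[of "-1" x] by simp
qed

lemma absv_diff_le_max: "absv (x - y) \<le> max (absv x) (absv y)"
  using absv_add_le_max[of x "-y"] by simp

lemma absv_add_le: "absv x \<le> M \<Longrightarrow> absv y \<le> M \<Longrightarrow> absv (x + y) \<le> M"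
  using absv_add_le_max[of x y] by simp

lemma absv_sum_le:
  assumes "\<And>i. i \<in> S \<Longrightarrow> absv (f i) \<le> M" and "M \<ge> 0"
  shows "absv (sum f S) \<le> M"
  using assms by (induction S rule: infinite_finite_induct) (simp_all add: absv_add_le)

lemma absv_power [simp]: "absv (x ^ n) = absv x ^ n"
  by (induction n) simp_all

lemma absv_prod [simp]: "absv (prod f A) = (\<Prod>a\<in>A. absv (f a))"
  by (induction A rule: infinite_finite_induct) simp_all

lemma absv_inverse [simp]: "absv (inverse x) = inverse (absv x)"
proof (cases "x = 0")
  case False
  then have "absv (inverse x) * absv x = 1"
    using absv_mult[of "inverse x" x] by simp
  then show ?thesis
    by (metis inverse_unique mult.commute)
qed simp

lemma absv_of_nat_le_1: "absv (of_nat n) \<le> 1"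
proof (induction n)
  case (Suc n)
  then show ?case
    using absv_add_le[of 1 1 "of_nat n"] by simp
qed simp

lemma absv_of_int_le_1: "absv (of_int k) \<le> 1"
  by (cases k rule: int_cases) (simp_all add: absv_of_nat_le_1 del: of_nat_Suc)

lemma absv_add_dominant: "absv e < absv d \<Longrightarrow> absv (d + e) = absv d"
  using absv_add_le_max[of d e] absv_diff_le_max[of "d + e" e] by (auto simp: max_def split: if_splits)

lemma absv_one_plus: "absv u < 1 \<Longrightarrow> absv (1 + u) = 1"
  using absv_add_dominant[of u 1] by simp

lemma absv_power_sub_1_le:
  assumes "absv (z - 1) < 1"
  shows "absv (z ^ j - 1) \<le> absv (z - 1)"
proof (induction j)
  case (Suc j)
  have "absv z = 1"
    using absv_one_plus[OF assms] by simp
  have "z ^ Suc j - 1 = z * (z ^ j - 1) + (z - 1)"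
    by (simp add: algebra_simps)
  also have "absv \<dots> \<le> absv (z - 1)"
    using Suc \<open>absv z = 1\<close> by (intro absv_add_le) simp_all
  finally show ?case .
qed (simp add: absv_nonneg)

end

locale nonarch_field_res_char = nonarch_field +
  fixes p :: nat
  assumes prime_p: "prime p" and absv_p_less_1: "absv (of_nat p) < 1"
begin

lemma absv_p_pos: "0 < absv (of_nat p)"
  using prime_gt_0_nat[OF prime_p] by (simp add: absv_pos_iff)

lemma absv_of_nat_not_dvd:
  assumes "\<not> p dvd k"
  shows "absv (of_nat k) = 1"
proof -
  have "coprime (int p) (int k)"
    using prime_p assms by (simp add: prime_imp_coprime)
  then have "gcd (int p) (int k) = 1"
    by simp
  then obtain u v where "u * int p + v * int k = 1"
    using bezout_int by metis
  then have "of_int u * of_nat p + of_int v * of_nat k = (1 :: 'a)"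
    by (metis of_int_1 of_int_add of_int_mult of_int_of_nat_eq)
  moreover have "absv (of_int u * of_nat p :: 'a) < 1"
  proof -
    have "absv (of_int u * of_nat p :: 'a) \<le> absv (of_nat p :: 'a)"
      using absv_of_int_le_1[of u] absv_nonneg[of "of_nat p"] absv_nonneg[of "of_int u"]
      by (simp add: mult_left_le_one_le)
    then show ?thesis
      using absv_p_less_1 by linarith
  qed
  ultimately have "1 \<le> absv (of_int v * of_nat k :: 'a)"
    using absv_add_le_max[of "of_int u * of_nat p" "of_int v * of_nat k"] by auto
  also have "\<dots> \<le> absv (of_nat k :: 'a)"
    using absv_of_int_le_1[of v] absv_nonneg[of "of_nat k"] absv_nonneg[of "of_int v"]
    by (simp add: mult_left_le_one_le)
  finally show ?thesis
    using absv_of_nat_le_1[of k] by linarith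
qed

lemma absv_power_sub_1_not_dvd:
  assumes "\<not> p dvd k" and "absv (z - 1) < 1"
  shows "absv (z ^ k - 1) = absv (z - 1)"
proof -
  define S where "S = (\<Sum>i<k. z ^ i - 1)"
  have "(\<Sum>i<k. z ^ i) = of_nat k + S"
    by (simp add: S_def sum_subtractf)
  then have "z ^ k - 1 = (z - 1) * (of_nat k + S)"
    using power_diff_1_eq[of z k] by simp
  moreover have "absv S < absv (of_nat k)"
    using absv_sum_le[of "{..<k}" "\<lambda>i. z ^ i - 1" "absv (z - 1)"] absv_power_sub_1_le[OF assms(2)]
      absv_nonneg assms by (simp add: S_def absv_of_nat_not_dvd le_less_trans)
  ultimately show ?thesis
    using absv_add_dominant[of S "of_nat k"] absv_of_nat_not_dvd[OF assms(1)] by simp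
qed

lemma absv_power_p_sub_1:
  assumes pos: "0 < absv (w - 1)" and small: "absv (w - 1) < absv (of_nat p)"
  shows "absv (w ^ p - 1) = absv (of_nat p) * absv (w - 1)"
proof -
  define e where "e = w - 1"
  have p2: "2 \<le> p"
    using prime_ge_2_nat[OF prime_p] .
  define f where "f k = of_nat (p choose k) * e ^ k" for k
  have "w ^ p = (\<Sum>k=0..p. f k)"
    using binomial_ring[of e 1 p] by (simp add: e_def f_def atLeast0AtMost)
  also have "\<dots> = f 0 + (f 1 + (\<Sum>k=2..p. f k))"
    using p2 by (simp add: sum.atLeast_Suc_atMost numeral_2_eq_2)
  finally have "w ^ p - 1 = of_nat p * e + (\<Sum>k=2..p. f k)"
    by (simp add: f_def)
  moreover have "absv (\<Sum>k=2..p. f k) < absv (of_nat p * e)"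
  proof -
    have e: "0 < absv e" "absv e < 1"
      using pos small absv_p_less_1 by (simp_all add: e_def)
    have "absv (f k) \<le> absv e ^ 2" if "k \<in> {2..p}" for k
    proof -
      have "absv (f k) \<le> absv e ^ k"
        using absv_of_nat_le_1[of "p choose k"] e by (simp add: f_def mult_left_le_one_le)
      also have "\<dots> \<le> absv e ^ 2"
        using that e by (intro power_decreasing) auto
      finally show ?thesis .
    qed
    then have "absv (\<Sum>k=2..p. f k) \<le> absv e ^ 2"
      by (intro absv_sum_le) auto
    also have "\<dots> < absv (of_nat p * e)"
      using small e by (simp add: e_def power2_eq_square)
    finally show ?thesis .
  qed
  ultimately show ?thesis
    using absv_add_dominant[of "\<Sum>k=2..p. f k" "of_nat p * e"] by (simp add: e_def)
qed

lemma absv_power_sub_1_near_1: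
  assumes "0 < absv (z - 1)" and "absv (z - 1) < absv (of_nat p)" and "m > 0"
  shows "0 < absv (z ^ m - 1) \<and> absv (z ^ m - 1) < absv (of_nat p)"
  using assms(3)
proof (induction m rule: less_induct)
  case (less m)
  show ?case
  proof (cases "p dvd m")
    case False
    have "absv (z - 1) < 1"
      using assms(2) absv_p_less_1 by linarith
    then show ?thesis
      using assms(1,2) absv_power_sub_1_not_dvd[OF False] by simp
  next
    case True
    then obtain m' where m': "m = p * m'"
      by (rule dvdE)
    have "0 < m'" "m' < m"
      using less.prems prime_gt_1_nat[OF prime_p] by (simp_all add: m')
    then have IH: "0 < absv (z ^ m' - 1)" "absv (z ^ m' - 1) < absv (of_nat p)"
      using less.IH by auto
    have "absv (z ^ m - 1) = absv (of_nat p) * absv (z ^ m' - 1)"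
      using absv_power_p_sub_1[OF IH] by (simp add: m' power_mult mult.commute[of p])
    moreover have "absv (of_nat p :: 'a) * absv (z ^ m' - 1) < absv (of_nat p)"
      using IH absv_p_pos absv_p_less_1 by (simp add: mult_less_cancel_left2)
    ultimately show ?thesis
      using IH absv_p_pos by simp
  qed
qed

lemma infinite_order_near_1:
  assumes "0 < absv (z - 1)" and "absv (z - 1) < absv (of_nat p)"
  shows "infinite_order z"
  unfolding infinite_order_def
proof (intro allI impI)
  fix n :: nat
  assume "n > 0"
  then show "z ^ n \<noteq> 1"
    using absv_power_sub_1_near_1[OF assms, of n] by auto
qed

end

locale first_order_approx = nonarch_field +
  fixes d :: real
  assumes d_nonneg: "0 \<le> d" and d_less_1: "d < 1"
begin

definition approx :: "'a \<Rightarrow> 'a \<Rightarrow> bool" where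
  "approx A a \<longleftrightarrow> absv (A - 1 - a) \<le> d\<^sup>2 \<and> absv a \<le> d"

lemma d_squared_le: "d * d \<le> d" "d * d\<^sup>2 \<le> d\<^sup>2" "d\<^sup>2 * d\<^sup>2 \<le> d\<^sup>2" "d\<^sup>2 \<le> d"
  using d_nonneg d_less_1 by (auto simp: power2_eq_square mult_left_le_one_le mult_le_one)

lemma approx_1_0: "approx 1 0"
  using d_nonneg by (simp add: approx_def)

lemma approx_1_plus: "absv u \<le> d \<Longrightarrow> approx (1 + u) u"
  using d_nonneg by (simp add: approx_def)

lemma approx_mult:
  assumes "approx A a" and "approx B b"
  shows "approx (A * B) (a + b)"
proof -
  define E F where "E = A - 1 - a" and "F = B - 1 - b"
  have E: "absv E \<le> d\<^sup>2" and a: "absv a \<le> d" and F: "absv F \<le> d\<^sup>2" and b: "absv b \<le> d"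
    using assms by (auto simp: approx_def E_def F_def)
  have "A * B - 1 - (a + b) = E + F + a * b + a * F + E * b + E * F"
    by (simp add: E_def F_def algebra_simps)
  moreover have "absv (E + F + a * b + a * F + E * b + E * F) \<le> d\<^sup>2"
    using absv_mult_le[OF a b] absv_mult_le[OF a F] absv_mult_le[OF E b] absv_mult_le[OF E F]
      d_squared_le E F
    by (intro absv_add_le) (auto simp: power2_eq_square mult_ac)
  ultimately show ?thesis
    using absv_add_le[OF a b] by (simp add: approx_def)
qed

lemma approx_absv_eq_1:
  assumes "approx A a"
  shows "absv A = 1"
proof -
  have "absv (a + (A - 1 - a)) \<le> d"
    using assms d_squared_le by (intro absv_add_le) (auto simp: approx_def)
  then have "absv (1 + (A - 1)) = 1"
    using d_less_1 by (intro absv_one_plus) simp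
  then show ?thesis
    by simp
qed

lemma approx_inverse:
  assumes "approx A a"
  shows "approx (inverse A) (- a)"
proof -
  have A: "absv A = 1" "A \<noteq> 0"
    using approx_absv_eq_1[OF assms] by auto
  define E where "E = A - 1 - a"
  have E: "absv E \<le> d\<^sup>2" and a: "absv a \<le> d"
    using assms by (auto simp: approx_def E_def)
  have "inverse A - 1 - (- a) = (- E + a * a + a * E) * inverse A"
    using A by (simp add: E_def field_simps)
  moreover have "absv (- E + a * a + a * E) \<le> d\<^sup>2"
    using absv_mult_le[OF a a] absv_mult_le[OF a E] d_squared_le E
    by (intro absv_add_le) (auto simp: power2_eq_square)
  ultimately show ?thesis
    using a A by (simp add: approx_def)
qed

lemma approx_power: "approx A a \<Longrightarrow> approx (A ^ n) (of_nat n * a)"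
proof (induction n)
  case (Suc n)
  then show ?case
    using approx_mult[of A a "A ^ n" "of_nat n * a"] by (simp add: algebra_simps)
qed (simp add: approx_1_0)

lemma approx_power_int:
  assumes "approx A a"
  shows "approx (A powi k) (of_int k * a)"
proof (cases "k \<ge> 0")
  case True
  then show ?thesis
    using approx_power[OF assms, of "nat k"] by (simp add: power_int_def)
next
  case False
  then show ?thesis
    using approx_power[OF approx_inverse[OF assms], of "nat (- k)"] by (simp add: power_int_def)
qed

lemma approx_prod: "(\<And>j. j \<in> S \<Longrightarrow> approx (A j) (a j)) \<Longrightarrow> approx (prod A S) (sum a S)"
  by (induction S rule: infinite_finite_induct) (simp_all add: approx_1_0 approx_mult)

lemma approx_sub_1_bounds:
  assumes "approx A a" and "d\<^sup>2 < absv a"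
  shows "0 < absv (A - 1)" and "absv (A - 1) \<le> d"
proof -
  have eq: "absv (A - 1) = absv a"
    using absv_add_dominant[of "A - 1 - a" a] assms by (simp add: approx_def)
  then show "0 < absv (A - 1)"
    using assms(2) zero_le_power2[of d] by linarith
  show "absv (A - 1) \<le> d"
    using eq assms(1) by (simp add: approx_def)
qed

end

lemma field_aut_add: "field_aut s \<Longrightarrow> s (x + y) = s x + s y"
  by (simp add: field_aut_def)

lemma field_aut_mult: "field_aut s \<Longrightarrow> s (x * y) = s x * s y"
  by (simp add: field_aut_def)

lemma field_aut_1: "field_aut s \<Longrightarrow> s 1 = 1"
  by (simp add: field_aut_def)

lemma field_aut_0: "field_aut s \<Longrightarrow> s 0 = 0"
  using field_aut_add[of s 0 0] add_left_imp_eq[of "s 0" "s 0" 0] by simp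

lemma field_aut_eq_0_iff: "field_aut s \<Longrightarrow> s x = 0 \<longleftrightarrow> x = 0"
  by (metis bij_is_inj field_aut_0 field_aut_def injD)

lemma field_aut_of_nat: "field_aut s \<Longrightarrow> s (of_nat n) = of_nat n"
  by (induction n) (simp_all add: field_aut_0 field_aut_1 field_aut_add)

lemma field_aut_power: "field_aut s \<Longrightarrow> s (x ^ n) = s x ^ n"
  by (induction n) (simp_all add: field_aut_1 field_aut_mult)

lemma field_aut_prod: "field_aut s \<Longrightarrow> s (prod f A) = (\<Prod>a\<in>A. s (f a))"
  by (induction A rule: infinite_finite_induct) (simp_all add: field_aut_1 field_aut_mult)

lemma field_aut_inverse: "field_aut s \<Longrightarrow> s (inverse x) = inverse (s x)"
  using field_aut_mult[of s x "inverse x"] field_aut_1[of s] field_aut_0[of s]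
  by (cases "x = 0") (simp_all add: inverse_unique)

lemma field_aut_inv:
  assumes "field_aut s"
  shows "field_aut (inv s)"
proof -
  have s: "bij s"
    using assms by (simp add: field_aut_def)
  have "inv s (s x) = x" "s (inv s x) = x" for x
    using s by (simp_all add: bij_is_inj bij_is_surj surj_f_inv_f)
  with assms show ?thesis
    unfolding field_aut_def by (metis bij_imp_bij_inv)
qed

lemma Gal_field_aut: "\<sigma> \<in> Gal absv \<Longrightarrow> field_aut \<sigma>"
  by (simp add: Gal_def)

lemma Gal_id: "id \<in> Gal absv"
  by (simp add: Gal_def field_aut_def)

lemma Gal_comp: "\<sigma> \<in> Gal absv \<Longrightarrow> \<tau> \<in> Gal absv \<Longrightarrow> \<sigma> \<circ> \<tau> \<in> Gal absv"
  unfolding Gal_def field_aut_def by (auto intro: bij_comp)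

lemma Gal_inv:
  assumes "\<sigma> \<in> Gal absv"
  shows "inv \<sigma> \<in> Gal absv"
proof -
  have \<sigma>: "field_aut \<sigma>" "\<forall>x\<in>Qp_in absv. \<sigma> x = x"
    using assms by (simp_all add: Gal_def)
  then have "inj \<sigma>"
    by (simp add: field_aut_def bij_is_inj)
  then have "\<forall>x\<in>Qp_in absv. inv \<sigma> x = x"
    using \<sigma>(2) by (metis inv_f_f)
  then show ?thesis
    using field_aut_inv[OF \<sigma>(1)] by (simp add: Gal_def)
qed

lemma Gal_inv_inv [simp]: "\<sigma> \<in> Gal absv \<Longrightarrow> inv (inv \<sigma>) = \<sigma>"
  by (simp add: Gal_def field_aut_def inv_inv_eq)

lemma Gal_one_plus_fixed_mult:
  "\<sigma> \<in> Gal absv \<Longrightarrow> \<sigma> t = t \<Longrightarrow> \<sigma> (1 + t * y) = 1 + t * \<sigma> y"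
  using Gal_field_aut[of \<sigma> absv] by (simp add: field_aut_add field_aut_mult field_aut_1)

lemma bij_betw_Gal_comp_left:
  assumes "\<sigma> \<in> Gal absv"
  shows "bij_betw ((\<circ>) \<sigma>) (Gal absv) (Gal absv)"
proof (rule bij_betw_byWitness[where f' = "(\<circ>) (inv \<sigma>)"])
  have "bij \<sigma>"
    using assms by (simp add: Gal_def field_aut_def)
  then have "inv \<sigma> \<circ> \<sigma> = id" "\<sigma> \<circ> inv \<sigma> = id"
    by (simp_all add: fun_eq_iff bij_is_inj bij_is_surj surj_f_inv_f)
  then show "\<forall>\<tau>\<in>Gal absv. inv \<sigma> \<circ> (\<sigma> \<circ> \<tau>) = \<tau>" "\<forall>\<tau>\<in>Gal absv. \<sigma> \<circ> (inv \<sigma> \<circ> \<tau>) = \<tau>"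
    by (simp_all add: comp_assoc[symmetric])
  show "(\<circ>) \<sigma> ` Gal absv \<subseteq> Gal absv" "(\<circ>) (inv \<sigma>) ` Gal absv \<subseteq> Gal absv"
    using assms by (auto intro: Gal_comp Gal_inv)
qed

lemma bij_betw_Gal_inv: "bij_betw inv (Gal absv) (Gal absv)"
  by (rule bij_betw_byWitness[where f' = inv]) (auto simp: Gal_inv)

lemma Gal_prod_comp_left:
  "\<sigma> \<in> Gal absv \<Longrightarrow> (\<Prod>\<tau>\<in>Gal absv. f (\<sigma> \<circ> \<tau>)) = (\<Prod>\<tau>\<in>Gal absv. f \<tau>)"
  using prod.reindex_bij_betw[OF bij_betw_Gal_comp_left] by blast

lemma Gal_sum_inv: "(\<Sum>\<tau>\<in>Gal absv. f (inv \<tau>)) = (\<Sum>\<tau>\<in>Gal absv. f \<tau>)"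
  using sum.reindex_bij_betw[OF bij_betw_Gal_inv] by blast

lemma characters_linearly_independent:
  fixes S :: "('a::field \<Rightarrow> 'a) set"
  assumes "finite S"
    and "\<And>s x y. s \<in> S \<Longrightarrow> s (x * y) = s x * s y" and "\<And>s. s \<in> S \<Longrightarrow> s 1 = 1"
    and "\<And>y. (\<Sum>s\<in>S. c s * s y) = 0"
  shows "\<forall>s\<in>S. c s = 0"
  using assms
proof (induction S arbitrary: c rule: finite_induct)
  case (insert t S)
  have rel: "c t * t y + (\<Sum>s\<in>S. c s * s y) = 0" for y
    using insert.prems(3)[of y] insert.hyps by simp
  have "c s = 0" if "s \<in> S" for s
  proof -
    have "s \<noteq> t"
      using that insert.hyps(2) by auto
    then obtain z where z: "s z \<noteq> t z"
      by (meson ext)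
    \<comment> \<open>Subtracting t z times the relation at y from the relation at z * y kills the t-term.\<close>
    have "\<forall>u\<in>S. c u * (u z - t z) = 0"
    proof (rule insert.IH)
      fix y
      have "(\<Sum>u\<in>S. c u * u (z * y)) = (\<Sum>u\<in>S. c u * u z * u y)"
        using insert.prems(1) by (intro sum.cong) auto
      then have "(\<Sum>u\<in>S. c u * (u z - t z) * u y)
          = (c t * t (z * y) + (\<Sum>u\<in>S. c u * u (z * y))) - t z * (c t * t y + (\<Sum>u\<in>S. c u * u y))"
        using insert.prems(1)[of t z y] by (simp add: algebra_simps sum_subtractf sum_distrib_left)
      then show "(\<Sum>u\<in>S. c u * (u z - t z) * u y) = 0"
        using rel[of "z * y"] rel[of y] by simp
    qed (use insert.prems in auto)
    then show ?thesis
      using that z by auto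
  qed
  moreover have "c t = 0"
    using calculation rel[of 1] insert.prems(2)[of t] by simp
  ultimately show ?case
    by simp
qed simp

lemma ex_common_nonzero:
  fixes L :: "'i \<Rightarrow> 'b::semiring_1 \<Rightarrow> 'a::field_char_0"
  assumes "finite I" and "\<And>i. i \<in> I \<Longrightarrow> \<exists>v. L i v \<noteq> 0"
    and additive: "\<And>i y v m. L i (y + of_nat m * v) = L i y + of_nat m * L i v"
  shows "\<exists>y. \<forall>i\<in>I. L i y \<noteq> 0"
  using assms(1,2)
proof (induction I rule: finite_induct)
  case (insert j I)
  obtain y where y: "\<forall>i\<in>I. L i y \<noteq> 0"
    using insert by auto
  obtain v where v: "L j v \<noteq> 0"
    using insert.prems by auto
  \<comment> \<open>Each of the maps m \<mapsto> L i (y + m v), i \<in> insert j I, is affine in m and not identically zero.\<close>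
  have "finite {m. L i y + of_nat m * L i v = 0}" if "i \<in> insert j I" for i
  proof (cases "L i v = 0")
    case True
    then have "L i y \<noteq> 0"
      using that y v by auto
    with True show ?thesis
      by simp
  next
    case False
    then have "{m. L i y + of_nat m * L i v = 0} = of_nat -` {- L i y / L i v}"
      by (auto simp: field_simps add_eq_0_iff2 add.commute)
    then show ?thesis
      by (simp add: finite_vimageI inj_of_nat)
  qed
  then have "finite (\<Union>i\<in>insert j I. {m. L i y + of_nat m * L i v = 0})"
    using insert.hyps(1) by blast
  then obtain m where "m \<notin> (\<Union>i\<in>insert j I. {m. L i y + of_nat m * L i v = 0})"
    using ex_new_if_finite[OF infinite_UNIV_nat] by blast
  then show ?case
    by (intro exI[of _ "y + of_nat m * v"]) (auto simp: additive)
qed simp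

definition trace_KQp :: "('a::field_char_0 \<Rightarrow> real) \<Rightarrow> 'a \<Rightarrow> 'a" where
  "trace_KQp absv y = (\<Sum>\<sigma>\<in>Gal absv. \<sigma> y)"

definition norm_one_proj :: "('a::field_char_0 \<Rightarrow> real) \<Rightarrow> 'a \<Rightarrow> 'a" where
  "norm_one_proj absv x = x ^ card (Gal absv) * inverse (norm_KQp absv x)"

text \<open>The linear term of psi h (norm_one_proj (1 + t y)) as a power series in t.\<close>
definition psi_linear :: "('a::field_char_0 \<Rightarrow> real) \<Rightarrow> (('a \<Rightarrow> 'a) \<Rightarrow> int) \<Rightarrow> 'a \<Rightarrow> 'a" where
  "psi_linear absv h y =
     (\<Sum>\<sigma>\<in>Gal absv. of_int (h \<sigma>) * (trace_KQp absv y - of_nat (card (Gal absv)) * inv \<sigma> y))"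

lemma Gal_norm_KQp: "\<sigma> \<in> Gal absv \<Longrightarrow> \<sigma> (norm_KQp absv x) = norm_KQp absv x"
  using Gal_prod_comp_left[of \<sigma> absv "\<lambda>\<tau>. \<tau> x"]
  by (simp add: norm_KQp_def field_aut_prod Gal_field_aut)

lemma norm_KQp_nonzero: "finite (Gal absv) \<Longrightarrow> x \<noteq> 0 \<Longrightarrow> norm_KQp absv x \<noteq> 0"
  by (simp add: norm_KQp_def field_aut_eq_0_iff Gal_field_aut)

lemma norm_KQp_norm_one_proj:
  assumes "finite (Gal absv)" and "x \<noteq> 0"
  shows "norm_KQp absv (norm_one_proj absv x) = 1"
proof -
  define N where "N = norm_KQp absv x"
  have "norm_KQp absv (norm_one_proj absv x) = (\<Prod>\<sigma>\<in>Gal absv. \<sigma> (norm_one_proj absv x))"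
    by (simp add: norm_KQp_def)
  also have "\<dots> = (\<Prod>\<sigma>\<in>Gal absv. \<sigma> x ^ card (Gal absv) * inverse N)"
    by (intro prod.cong) (simp_all add: norm_one_proj_def N_def Gal_field_aut field_aut_mult
        field_aut_power field_aut_inverse Gal_norm_KQp)
  also have "\<dots> = (N * inverse N) ^ card (Gal absv)"
    by (simp add: prod.distrib prod_power_distrib power_mult_distrib N_def norm_KQp_def)
  also have "\<dots> = 1"
    using norm_KQp_nonzero[OF assms] by (simp add: N_def)
  finally show ?thesis .
qed

lemma (in nonarch_field) absv_norm_one_proj:
  assumes "\<And>\<sigma>. \<sigma> \<in> Gal absv \<Longrightarrow> absv (\<sigma> x) = 1"
  shows "absv (norm_one_proj absv x) = 1"
  using assms[of id] by (simp add: norm_one_proj_def norm_KQp_def assms Gal_id)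

lemma psi_linear_eq_sum_characters:
  "psi_linear absv h y =
     (\<Sum>\<rho>\<in>Gal absv. of_int ((\<Sum>\<sigma>\<in>Gal absv. h \<sigma>) - int (card (Gal absv)) * h (inv \<rho>)) * \<rho> y)"
proof -
  define n H where "n = card (Gal absv)" and "H = (\<Sum>\<sigma>\<in>Gal absv. h \<sigma>)"
  have reindex: "(\<Sum>\<sigma>\<in>Gal absv. of_int (h \<sigma>) * inv \<sigma> y) = (\<Sum>\<rho>\<in>Gal absv. of_int (h (inv \<rho>)) * \<rho> y)"
    using Gal_sum_inv[of "\<lambda>\<rho>. of_int (h (inv \<rho>)) * \<rho> y" absv]
    by (simp add: Gal_inv_inv cong: sum.cong)
  have "psi_linear absv h y = (\<Sum>\<sigma>\<in>Gal absv. of_int (h \<sigma>) * trace_KQp absv y)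
      - (\<Sum>\<sigma>\<in>Gal absv. of_nat n * (of_int (h \<sigma>) * inv \<sigma> y))"
    by (simp add: psi_linear_def right_diff_distrib sum_subtractf mult.left_commute n_def)
  also have "\<dots> = of_int H * trace_KQp absv y - of_nat n * (\<Sum>\<sigma>\<in>Gal absv. of_int (h \<sigma>) * inv \<sigma> y)"
    by (simp add: H_def sum_distrib_left sum_distrib_right)
  also have "\<dots> = of_int H * trace_KQp absv y - of_nat n * (\<Sum>\<rho>\<in>Gal absv. of_int (h (inv \<rho>)) * \<rho> y)"
    using reindex by simp
  also have "\<dots> = (\<Sum>\<rho>\<in>Gal absv. of_int (H - int n * h (inv \<rho>)) * \<rho> y)"
    by (simp add: trace_KQp_def left_diff_distrib sum_subtractf sum_distrib_left mult.assoc)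
  finally show ?thesis
    by (simp add: n_def H_def)
qed

lemma psi_linear_add_of_nat_mult:
  "psi_linear absv h (y + of_nat m * v) = psi_linear absv h y + of_nat m * psi_linear absv h v"
proof -
  have additive: "\<sigma> (y + of_nat m * v) = \<sigma> y + of_nat m * \<sigma> v" if "\<sigma> \<in> Gal absv" for \<sigma>
    using Gal_field_aut[OF that] by (simp add: field_aut_add field_aut_mult field_aut_of_nat)
  have trace: "trace_KQp absv (y + of_nat m * v) = trace_KQp absv y + of_nat m * trace_KQp absv v"
    unfolding trace_KQp_def by (simp add: additive sum.distrib sum_distrib_left cong: sum.cong)
  have "psi_linear absv h (y + of_nat m * v) = (\<Sum>\<sigma>\<in>Gal absv.
      of_int (h \<sigma>) * (trace_KQp absv y - of_nat (card (Gal absv)) * inv \<sigma> y)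
      + of_nat m * (of_int (h \<sigma>) * (trace_KQp absv v - of_nat (card (Gal absv)) * inv \<sigma> v)))"
    unfolding psi_linear_def trace
    by (intro sum.cong refl) (simp only: additive[OF Gal_inv], simp add: algebra_simps)
  then show ?thesis
    by (simp add: psi_linear_def sum.distrib sum_distrib_left)
qed

lemma ex_psi_linear_nonzero:
  assumes "finite (Gal absv)" and "\<sigma> \<in> Gal absv" "\<tau> \<in> Gal absv" "h \<sigma> \<noteq> h \<tau>"
  shows "\<exists>v. psi_linear absv h v \<noteq> 0"
proof (rule ccontr)
  define n H where "n = card (Gal absv)" and "H = (\<Sum>\<sigma>\<in>Gal absv. h \<sigma>)"
  assume "\<nexists>v. psi_linear absv h v \<noteq> 0"
  then have "(\<Sum>\<rho>\<in>Gal absv. of_int (H - int n * h (inv \<rho>)) * \<rho> y) = 0" for y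
    using psi_linear_eq_sum_characters[of absv h y] by (simp add: n_def H_def)
  then have "\<forall>\<rho>\<in>Gal absv. (of_int (H - int n * h (inv \<rho>)) :: 'a) = 0"
    by (intro characters_linearly_independent[OF assms(1)])
      (simp_all add: Gal_field_aut field_aut_mult field_aut_1)
  then have "H = int n * h \<rho>" if "\<rho> \<in> Gal absv" for \<rho>
    using Gal_inv[OF that] that by (metis Gal_inv_inv of_int_eq_0_iff right_minus_eq)
  moreover have "n > 0"
    using assms(1,2) card_gt_0_iff n_def by blast
  ultimately show False
    using assms(2-4) by (metis mult_cancel_left of_nat_0_less_iff less_irrefl)
qed

context first_order_approx
begin

lemma approx_Gal_norm_one_proj:
  assumes fixed: "\<And>\<tau>. \<tau> \<in> Gal absv \<Longrightarrow> \<tau> t = t"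
    and small: "\<And>\<tau>. \<tau> \<in> Gal absv \<Longrightarrow> absv (t * \<tau> y) \<le> d"
    and \<sigma>: "\<sigma> \<in> Gal absv"
  shows "approx (\<sigma> (norm_one_proj absv (1 + t * y)))
           (of_nat (card (Gal absv)) * (t * \<sigma> y) - t * trace_KQp absv y)"
proof -
  have conj: "\<tau> (1 + t * y) = 1 + t * \<tau> y" if "\<tau> \<in> Gal absv" for \<tau>
    using Gal_one_plus_fixed_mult[OF that fixed[OF that]] .
  have "approx (\<Prod>\<tau>\<in>Gal absv. 1 + t * \<tau> y) (\<Sum>\<tau>\<in>Gal absv. t * \<tau> y)"
    by (intro approx_prod approx_1_plus small)
  then have norm: "approx (norm_KQp absv (1 + t * y)) (t * trace_KQp absv y)"
    by (simp add: norm_KQp_def trace_KQp_def conj sum_distrib_left cong: prod.cong)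
  have "\<sigma> (norm_one_proj absv (1 + t * y))
      = (1 + t * \<sigma> y) ^ card (Gal absv) * inverse (norm_KQp absv (1 + t * y))"
    using Gal_field_aut[OF \<sigma>]
    by (simp add: norm_one_proj_def field_aut_mult field_aut_power field_aut_inverse
        Gal_norm_KQp[OF \<sigma>] conj[OF \<sigma>])
  with approx_mult[OF approx_power[OF approx_1_plus[OF small[OF \<sigma>]]] approx_inverse[OF norm]]
  show ?thesis
    by simp
qed

lemma approx_psi_norm_one_proj:
  assumes fixed: "\<And>\<tau>. \<tau> \<in> Gal absv \<Longrightarrow> \<tau> t = t"
    and small: "\<And>\<tau>. \<tau> \<in> Gal absv \<Longrightarrow> absv (t * \<tau> y) \<le> d"
  shows "approx (psi absv h (norm_one_proj absv (1 + t * y))) (t * psi_linear absv h y)"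
proof -
  have "approx (inv \<sigma> (norm_one_proj absv (1 + t * y)))
      (of_nat (card (Gal absv)) * (t * inv \<sigma> y) - t * trace_KQp absv y)" if "\<sigma> \<in> Gal absv" for \<sigma>
    using fixed small Gal_inv[OF that] by (rule approx_Gal_norm_one_proj)
  then have "approx (psi absv h (norm_one_proj absv (1 + t * y)))
      (\<Sum>\<sigma>\<in>Gal absv. of_int (- h \<sigma>) *
         (of_nat (card (Gal absv)) * (t * inv \<sigma> y) - t * trace_KQp absv y))"
    unfolding psi_def
    by (intro approx_prod approx_power_int)
  then show ?thesis
    by (simp add: psi_linear_def sum_distrib_left algebra_simps)
qed

end

context nonarch_field_res_char
begin

lemma ex_Gal_fixed_scale:
  assumes "0 < B" and "0 < \<mu>"
  shows "\<exists>t. (\<forall>\<sigma>\<in>Gal absv. \<sigma> t = t) \<and> absv t * B < absv (of_nat p) \<and> (absv t * B)\<^sup>2 < absv t * \<mu>"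
proof -
  have "0 < min (absv (of_nat p) / B) (\<mu> / B\<^sup>2)"
    using assms absv_p_pos by simp
  then obtain k where k: "absv (of_nat p :: 'a) ^ k < min (absv (of_nat p) / B) (\<mu> / B\<^sup>2)"
    using real_arch_pow_inv absv_p_pos absv_p_less_1 by blast
  define t :: 'a where "t = of_nat p ^ k"
  have "\<sigma> t = t" if "\<sigma> \<in> Gal absv" for \<sigma>
    using Gal_field_aut[OF that] by (simp add: t_def field_aut_power field_aut_of_nat)
  moreover have "absv t * B < absv (of_nat p)"
    using k assms by (simp add: t_def pos_less_divide_eq)
  moreover have "(absv t * B)\<^sup>2 < absv t * \<mu>"
  proof -
    have "absv t * B\<^sup>2 < \<mu>"
      using k assms by (simp add: t_def pos_less_divide_eq)
    moreover have "0 < absv t"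
      using absv_p_pos by (simp add: t_def)
    ultimately show ?thesis
      by (simp add: power2_eq_square mult_ac)
  qed
  ultimately show ?thesis
    by blast
qed

lemma ex_norm_one_unit_psi_near_1:
  assumes "finite (Gal absv)" and "finite I" and nonzero: "\<And>i. i \<in> I \<Longrightarrow> psi_linear absv (h i) y \<noteq> 0"
  shows "\<exists>\<omega>\<in>OK_units absv. norm_KQp absv \<omega> = 1 \<and>
           (\<forall>i\<in>I. 0 < absv (psi absv (h i) \<omega> - 1) \<and> absv (psi absv (h i) \<omega> - 1) < absv (of_nat p))"
proof -
  define B where "B = 1 + (\<Sum>\<sigma>\<in>Gal absv. absv (\<sigma> y))"
  define \<mu> where "\<mu> = Min (insert 1 ((\<lambda>i. absv (psi_linear absv (h i) y)) ` I))"
  have B_pos: "0 < B"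
    by (simp add: B_def absv_nonneg sum_nonneg add_pos_nonneg)
  have B_bound: "absv (\<sigma> y) \<le> B" if "\<sigma> \<in> Gal absv" for \<sigma>
    using member_le_sum[of \<sigma> "Gal absv" "\<lambda>\<sigma>. absv (\<sigma> y)"] that assms(1)
    by (simp add: B_def absv_nonneg)
  have \<mu>_pos: "0 < \<mu>"
    using nonzero assms(2) by (auto simp: \<mu>_def absv_pos_iff)
  have \<mu>_le: "\<mu> \<le> absv (psi_linear absv (h i) y)" if "i \<in> I" for i
    using assms(2) that by (simp add: \<mu>_def)
  obtain t where fixed: "\<forall>\<sigma>\<in>Gal absv. \<sigma> t = t" and d: "absv t * B < absv (of_nat p)"
    and d_squared: "(absv t * B)\<^sup>2 < absv t * \<mu>"
    using ex_Gal_fixed_scale[OF B_pos \<mu>_pos] by blast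
  interpret first_order_approx absv "absv t * B"
    using d absv_p_less_1 absv_nonneg[of t] B_pos by unfold_locales auto
  have small: "absv (t * \<sigma> y) \<le> absv t * B" if "\<sigma> \<in> Gal absv" for \<sigma>
    using B_bound[OF that] absv_nonneg by (simp add: mult_left_mono)
  define \<omega> where "\<omega> = norm_one_proj absv (1 + t * y)"
  have conj_unit: "absv (\<sigma> (1 + t * y)) = 1" if "\<sigma> \<in> Gal absv" for \<sigma>
    using approx_absv_eq_1[OF approx_1_plus[OF small[OF that]]] fixed that
    by (simp add: Gal_one_plus_fixed_mult)
  have "1 + t * y \<noteq> 0"
    using conj_unit[OF Gal_id] by auto
  then have "\<omega> \<in> OK_units absv" and "norm_KQp absv \<omega> = 1"
    using absv_norm_one_proj[OF conj_unit] norm_KQp_norm_one_proj[OF assms(1)]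
    by (simp_all add: OK_units_def \<omega>_def)
  moreover have "0 < absv (psi absv (h i) \<omega> - 1) \<and> absv (psi absv (h i) \<omega> - 1) < absv (of_nat p)"
    if "i \<in> I" for i
  proof -
    have approx: "approx (psi absv (h i) \<omega>) (t * psi_linear absv (h i) y)"
      unfolding \<omega>_def using fixed small by (intro approx_psi_norm_one_proj) auto
    have "absv t * \<mu> \<le> absv (t * psi_linear absv (h i) y)"
      using \<mu>_le[OF that] absv_nonneg[of t] by (simp add: mult_left_mono)
    with d_squared have "(absv t * B)\<^sup>2 < absv (t * psi_linear absv (h i) y)"
      by linarith
    with approx_sub_1_bounds[OF approx] d show ?thesis
      by auto
  qed
  ultimately show ?thesis
    by blast
qed

end

theorem lemma2p3:
  fixes p :: nat and absv :: "'a::field_char_0 \<Rightarrow> real"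
    and r :: nat and h :: "nat \<Rightarrow> ('a \<Rightarrow> 'a) \<Rightarrow> int"
  assumes "padic_field p absv"
    and "galois_over_Qp absv"
    and "\<And>i. i \<in> {1..r} \<Longrightarrow> (\<Sum>\<sigma>\<in>Gal absv. h i \<sigma>) \<noteq> 0"
    and "\<And>i. i \<in> {1..r} \<Longrightarrow> \<exists>\<sigma>\<in>Gal absv. \<exists>\<tau>\<in>Gal absv. h i \<sigma> \<noteq> h i \<tau>"
  shows "\<exists>\<omega>\<in>OK_units absv. norm_KQp absv \<omega> = 1 \<and>
           (\<forall>i\<in>{1..r}. infinite_order (psi absv (h i) \<omega>))"
proof -
  interpret nonarch_field_res_char absv p
    using assms(1) by unfold_locales (simp_all add: padic_field_def)
  show ?thesis
  proof (cases "r = 0")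
    case True
    have "norm_KQp absv 1 = 1"
      by (simp add: norm_KQp_def Gal_field_aut field_aut_1)
    with True show ?thesis
      by (intro bexI[of _ 1]) (simp_all add: OK_units_def)
  next
    case False
    then have "(\<Sum>\<sigma>\<in>Gal absv. h 1 \<sigma>) \<noteq> 0"
      using assms(3)[of 1] by simp
    then have finite: "finite (Gal absv)"
      using sum.infinite by blast
    have "\<exists>v. psi_linear absv (h i) v \<noteq> 0" if "i \<in> {1..r}" for i
      using assms(4)[OF that] ex_psi_linear_nonzero[OF finite] by blast
    then obtain y where "\<forall>i\<in>{1..r}. psi_linear absv (h i) y \<noteq> 0"
      using ex_common_nonzero[of "{1..r}" "\<lambda>i. psi_linear absv (h i)"] psi_linear_add_of_nat_mult
      by blast
    then obtain \<omega> where "\<omega> \<in> OK_units absv" "norm_KQp absv \<omega> = 1"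
      and "\<forall>i\<in>{1..r}. 0 < absv (psi absv (h i) \<omega> - 1) \<and> absv (psi absv (h i) \<omega> - 1) < absv (of_nat p)"
      using ex_norm_one_unit_psi_near_1[OF finite, of "{1..r}" h y] by auto
    then show ?thesis
      using infinite_order_near_1 by blast
  qed
qed

end
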